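(* Let $k\ge2$, let $A=\{a_1,\dots,a_n\}$ be a sorted multiset of positive integers ($a_1\le\dots\le a_n$), and let $\varepsilon\in(0,1)$. Let $c=1+\left\lceil\left(1+\frac1\varepsilon\right)\ln\frac{2(k-1)}{\varepsilon^2}\right\rceil$ and $C=(c+1)(k-1)$. Then $$\mathrm{OPT}(A)\le\min_{k\le j\le n}\mathrm{OPT_L}\bigl(A[j-C+1,j]\bigr)\le(1+\varepsilon)\,\mathrm{OPT}(A).$$
   Context: $[n]=\{1,\dots,n\}$; $\Sigma(S,A)=\sum_{i\in S}a_i$; for pairwise disjoint $S_1,\dots,S_k\subseteq[n]$, $\mathcal{R}(S_1,\dots,S_k,A)=\max_i\Sigma(S_i,A)/\min_i\Sigma(S_i,A)$ if the minimum is positive and $+\infty$ otherwise. $\mathrm{OPT}(A)$ is the minimum ratio over all $k$-tuples of pairwise disjoint subsets of the index set of $A$ (the $k$-SSR problem). $\mathrm{OPT_L}(A)$ is the minimum ratio over such $k$-tuples that additionally contain the largest index (i.e. the largest element of the sorted multiset must belong to some $S_i$; the $k$-SSR$_L$ problem). $A[l,r]$ denotes the sorted multiset consisting of the items $a_i$ with $l\le i\le r$ (so indices below $1$ are simply absent). *)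

theory Defs
  imports Complex_Main "HOL-Library.Extended_Real"
begin

text \<open>A sorted multiset A = {a_1,...,a_n} is represented as a sorted list;
  item a_i is A ! (i - 1), index set [n] = {1..length A}.
  A k-tuple of subsets is a function S :: nat \<Rightarrow> nat set, components S 0, ..., S (k-1).\<close>

definition SigmaS :: "nat set \<Rightarrow> nat list \<Rightarrow> real" where
  "SigmaS S A = (\<Sum>i\<in>S. real (A ! (i - 1)))"

definition ratio :: "nat \<Rightarrow> (nat \<Rightarrow> nat set) \<Rightarrow> nat list \<Rightarrow> ereal" where
  "ratio k S A =
     (let mx = Max ((\<lambda>i. SigmaS (S i) A) ` {..<k});
          mn = Min ((\<lambda>i. SigmaS (S i) A) ` {..<k})
      in if mn > 0 then ereal (mx / mn) else \<infinity>)"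

definition feasible :: "nat \<Rightarrow> (nat \<Rightarrow> nat set) \<Rightarrow> nat list \<Rightarrow> bool" where
  "feasible k S A \<longleftrightarrow> (\<forall>i<k. S i \<subseteq> {1..length A}) \<and>
     (\<forall>i<k. \<forall>j<k. i \<noteq> j \<longrightarrow> S i \<inter> S j = {})"

definition OPT :: "nat \<Rightarrow> nat list \<Rightarrow> ereal" where
  "OPT k A = (INF S\<in>{S. feasible k S A}. ratio k S A)"

definition OPT_L :: "nat \<Rightarrow> nat list \<Rightarrow> ereal" where
  "OPT_L k A = (INF S\<in>{S. feasible k S A \<and> length A \<in> (\<Union>i<k. S i)}. ratio k S A)"

text \<open>A[l,r]: the sorted multiset of items a_i with l \<le> i \<le> r (indices < 1 absent).\<close>
definition subrange :: "nat list \<Rightarrow> int \<Rightarrow> int \<Rightarrow> nat list" where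
  "subrange A l r = map (\<lambda>i. A ! (i - 1)) [nat (max 1 l) ..< nat r + 1]"

end

theory Submission
  imports Defs
begin

(*
  Shifting indices turns every k-tuple for a window A[j-C+1, j] into a k-tuple for A with the
  same part sums, which gives the lower bound.

  For the upper bound fix a k-tuple S for A with part sums in [m, M] and let j be the largest
  index it uses; j >= k because the parts are disjoint and nonempty. If some item satisfies
  a_i <= (1 + eps) a_(i-k+1), the k singletons a_(i-k+1), ..., a_i have ratio at most 1 + eps;
  if a_(j-k+1) >= m / (1 + eps), the k singletons ending at j have ratio at most (1 + eps) M / m.
  Otherwise the items grow by a factor 1 + eps every k - 1 steps, so the items of index at most
  j - C sum to at most eps a_(j-k+1) < eps m / (1 + eps) by the choice of c. Deleting them from S
  leaves a tuple inside the window ending at j that still uses j and has part sums in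
  [m / (1 + eps), M].
*)

lemma feasibleD:
  assumes "feasible k T A" "i < k" "t \<in> T i"
  shows "1 \<le> t" "t \<le> length A"
  using assms unfolding feasible_def by fastforce+

lemma feasible_image:
  assumes "feasible k T A" and "inj_on g (\<Union>i<k. T i)"
    and "\<And>i t. i < k \<Longrightarrow> t \<in> T i \<Longrightarrow> g t \<in> {1..length B}"
  shows "feasible k (\<lambda>i. g ` T i) B"
proof -
  have "g ` T i \<inter> g ` T i' = {}" if "i < k" "i' < k" "i \<noteq> i'" for i i'
  proof -
    have "T i \<inter> T i' = {}" using assms(1) that unfolding feasible_def by blast
    then show ?thesis
      using inj_on_image_Int[OF assms(2), of "T i" "T i'"] that by auto
  qed
  then show ?thesis using assms(3) unfolding feasible_def by blast
qed

lemma ratio_image: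
  assumes "inj_on g (\<Union>i<k. T i)"
    and "\<And>i t. i < k \<Longrightarrow> t \<in> T i \<Longrightarrow> B ! (g t - 1) = A ! (t - 1)"
  shows "ratio k (\<lambda>i. g ` T i) B = ratio k T A"
proof -
  have "SigmaS (g ` T i) B = SigmaS (T i) A" if "i < k" for i
  proof -
    have "inj_on g (T i)" using that by (intro inj_on_subset[OF assms(1)]) auto
    then show ?thesis using assms(2) that unfolding SigmaS_def by (simp add: sum.reindex)
  qed
  then have "(\<lambda>i. SigmaS (g ` T i) B) ` {..<k} = (\<lambda>i. SigmaS (T i) A) ` {..<k}" by simp
  then show ?thesis unfolding ratio_def by simp
qed

lemma OPT_le_ratio: "feasible k S A \<Longrightarrow> OPT k A \<le> ratio k S A"
  unfolding OPT_def by (rule INF_lower) simp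

lemma OPT_L_le_ratio:
  "feasible k S A \<Longrightarrow> length A \<in> (\<Union>i<k. S i) \<Longrightarrow> OPT_L k A \<le> ratio k S A"
  unfolding OPT_L_def by (rule INF_lower) simp

lemma OPT_le_OPT_take: "OPT k A \<le> OPT k (take j A)"
  unfolding OPT_def[of k "take j A"]
proof (rule INF_greatest)
  fix T assume "T \<in> {S. feasible k S (take j A)}"
  then have T: "feasible k T (take j A)" by simp
  have idx: "1 \<le> t \<and> t \<le> length A \<and> t \<le> j" if "i < k" "t \<in> T i" for i t
    using feasibleD[OF T that] by simp
  have "OPT k A \<le> ratio k (\<lambda>i. id ` T i) A"
    by (intro OPT_le_ratio feasible_image[OF T]) (auto dest: idx)
  also have "\<dots> = ratio k T (take j A)"
    by (rule ratio_image) (auto dest: idx)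
  finally show "OPT k A \<le> ratio k T (take j A)" .
qed

lemma OPT_le_OPT_drop: "OPT k A \<le> OPT k (drop d A)"
  unfolding OPT_def[of k "drop d A"]
proof (rule INF_greatest)
  fix T assume "T \<in> {S. feasible k S (drop d A)}"
  then have T: "feasible k T (drop d A)" by simp
  have idx: "1 \<le> t \<and> t + d \<le> length A" if "i < k" "t \<in> T i" for i t
    using feasibleD[OF T that] by simp
  have "OPT k A \<le> ratio k (\<lambda>i. (\<lambda>t. t + d) ` T i) A"
    by (intro OPT_le_ratio feasible_image[OF T]) (auto dest: idx)
  also have "\<dots> = ratio k T (drop d A)"
    by (rule ratio_image) (auto dest: idx simp: add.commute)
  finally show "OPT k A \<le> ratio k T (drop d A)" .
qed

lemma OPT_L_drop_take_le_ratio: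
  assumes "feasible k T A" and "j \<le> length A"
    and "\<forall>i<k. T i \<subseteq> {d<..j}" and "j \<in> (\<Union>i<k. T i)"
  shows "OPT_L k (drop d (take j A)) \<le> ratio k T A"
proof -
  let ?B = "drop d (take j A)"
  have sub: "(\<Union>i<k. T i) \<subseteq> {d<..j}" using assms(3) by blast
  then have inj: "inj_on (\<lambda>t. t - d) (\<Union>i<k. T i)"
    by (rule inj_on_subset[rotated]) (auto simp: inj_on_def)
  have len: "length ?B = j - d" using assms(2) by simp
  have "OPT_L k ?B \<le> ratio k (\<lambda>i. (\<lambda>t. t - d) ` T i) ?B"
  proof (rule OPT_L_le_ratio)
    show "feasible k (\<lambda>i. (\<lambda>t. t - d) ` T i) ?B"
      by (rule feasible_image[OF assms(1) inj]) (use sub len in fastforce)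
    show "length ?B \<in> (\<Union>i<k. (\<lambda>t. t - d) ` T i)" using assms(4) len by blast
  qed
  also have "\<dots> = ratio k T A"
    by (rule ratio_image[OF inj]) (use sub assms(2) in \<open>fastforce simp: Suc_diff_Suc\<close>)
  finally show ?thesis .
qed

lemma subrange_eq_drop_take:
  assumes "j \<le> length A"
  shows "subrange A l (int j) = drop (nat (max 1 l) - 1) (take j A)"
proof (rule nth_equalityI)
  show "length (subrange A l (int j)) = length (drop (nat (max 1 l) - 1) (take j A))"
    using assms unfolding subrange_def by (simp del: upt_Suc)
  fix i assume "i < length (subrange A l (int j))"
  then show "subrange A l (int j) ! i = drop (nat (max 1 l) - 1) (take j A) ! i"
    using assms unfolding subrange_def by (simp add: add.commute del: upt_Suc)
qed

lemma OPT_le_OPT_L: "OPT k A \<le> OPT_L k A"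
  unfolding OPT_def OPT_L_def by (rule INF_superset_mono) auto

lemma ratio_le_divide:
  assumes "0 < k" and "0 < l"
    and "\<And>i. i < k \<Longrightarrow> l \<le> SigmaS (T i) A \<and> SigmaS (T i) A \<le> h"
  shows "ratio k T A \<le> ereal (h / l)"
proof -
  let ?X = "(\<lambda>i. SigmaS (T i) A) ` {..<k}"
  have X: "finite ?X" "?X \<noteq> {}" using assms(1) by auto
  have "l \<le> Min ?X" and "Max ?X \<le> h" using X assms(3) by auto
  moreover have "Min ?X \<le> Max ?X" using X by (meson Max_ge Min_le ex_in_conv order.trans)
  ultimately have "Max ?X / Min ?X \<le> h / l" using assms(2) by (intro frac_le) auto
  then show ?thesis using \<open>l \<le> Min ?X\<close> assms(2) unfolding ratio_def Let_def by auto
qed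

lemma ratio_finiteE:
  assumes "0 < k" and "ratio k S A \<noteq> \<infinity>"
  obtains m M where "0 < m"
    and "\<And>i. i < k \<Longrightarrow> m \<le> SigmaS (S i) A \<and> SigmaS (S i) A \<le> M"
    and "ratio k S A = ereal (M / m)"
proof -
  let ?X = "(\<lambda>i. SigmaS (S i) A) ` {..<k}"
  have X: "finite ?X" "?X \<noteq> {}" using assms(1) by auto
  have "0 < Min ?X" using assms(2) unfolding ratio_def Let_def by (auto split: if_splits)
  moreover have "Min ?X \<le> SigmaS (S i) A \<and> SigmaS (S i) A \<le> Max ?X" if "i < k" for i
    using X that by auto
  moreover have "ratio k S A = ereal (Max ?X / Min ?X)"
    using \<open>0 < Min ?X\<close> unfolding ratio_def Let_def by simp
  ultimately show thesis by (rule that)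
qed

lemma ereal_le_mult_INF:
  fixes x :: ereal and e :: real
  assumes "0 < e" and "\<And>s. s \<in> D \<Longrightarrow> x \<le> ereal e * f s"
  shows "x \<le> ereal e * (INF s\<in>D. f s)"
proof -
  have "x / ereal e \<le> (INF s\<in>D. f s)"
    using assms by (intro INF_greatest) (simp add: ereal_divide_le_pos)
  then show ?thesis using assms(1) by (simp add: ereal_divide_le_pos)
qed

definition window_OPT :: "nat \<Rightarrow> int \<Rightarrow> nat list \<Rightarrow> ereal" where
  "window_OPT k C A = (INF j\<in>{k..length A}. OPT_L k (subrange A (int j - C + 1) (int j)))"

lemma OPT_le_window_OPT: "OPT k A \<le> window_OPT k C A"
  unfolding window_OPT_def
proof (rule INF_greatest)
  fix j assume "j \<in> {k..length A}"
  then have B: "subrange A (int j - C + 1) (int j)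
      = drop (nat (max 1 (int j - C + 1)) - 1) (take j A)"
    by (intro subrange_eq_drop_take) simp
  have "OPT k A \<le> OPT k (take j A)" by (rule OPT_le_OPT_take)
  also have "\<dots> \<le> OPT k (drop (nat (max 1 (int j - C + 1)) - 1) (take j A))"
    by (rule OPT_le_OPT_drop)
  also have "\<dots> \<le> OPT_L k (subrange A (int j - C + 1) (int j))"
    unfolding B by (rule OPT_le_OPT_L)
  finally show "OPT k A \<le> OPT_L k (subrange A (int j - C + 1) (int j))" .
qed

lemma window_OPT_le_ratio:
  assumes "feasible k T A" and "k \<le> j" and "j \<le> length A" and "j \<in> (\<Union>i<k. T i)"
    and "\<And>i t. i < k \<Longrightarrow> t \<in> T i \<Longrightarrow> int j - C < int t \<and> t \<le> j"
  shows "window_OPT k C A \<le> ratio k T A"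
proof -
  define d where "d = nat (max 1 (int j - C + 1)) - 1"
  have "\<forall>i<k. T i \<subseteq> {d<..j}"
    using assms(5) feasibleD(1)[OF assms(1)] unfolding d_def by fastforce
  then have "OPT_L k (subrange A (int j - C + 1) (int j)) \<le> ratio k T A"
    using OPT_L_drop_take_le_ratio[OF assms(1,3) _ assms(4)]
    unfolding subrange_eq_drop_take[OF assms(3)] d_def by blast
  then show ?thesis unfolding window_OPT_def using assms(2,3) by (meson INF_lower2 atLeastAtMost_iff)
qed

lemma window_OPT_le_singletons:
  assumes "sorted A" and "0 < k" and "int k \<le> C" and "k \<le> j" and "j \<le> length A"
    and "0 < A ! (j - k)"
  shows "window_OPT k C A \<le> ereal (real (A ! (j - 1)) / real (A ! (j - k)))"
proof -
  define T where "T i = {j - i}" for i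
  have "feasible k T A" using assms(4,5) unfolding feasible_def T_def by auto
  then have "window_OPT k C A \<le> ratio k T A"
    by (rule window_OPT_le_ratio) (use assms(2-5) in \<open>auto simp: T_def intro: bexI[of _ 0]\<close>)
  also have "\<dots> \<le> ereal (real (A ! (j - 1)) / real (A ! (j - k)))"
  proof (rule ratio_le_divide)
    fix i assume "i < k"
    then have "A ! (j - k) \<le> A ! (j - i - 1) \<and> A ! (j - i - 1) \<le> A ! (j - 1)"
      using assms(1,4,5) by (auto intro!: sorted_nth_mono)
    then show "real (A ! (j - k)) \<le> SigmaS (T i) A \<and> SigmaS (T i) A \<le> A ! (j - 1)"
      unfolding T_def SigmaS_def by simp
  qed (use assms(2,6) in auto)
  finally show ?thesis .
qed

lemma feasible_max_index:
  assumes "feasible k S A" and "0 < k" and "\<And>i. i < k \<Longrightarrow> S i \<noteq> {}"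
  obtains i0 j where "i0 < k" and "j \<in> S i0" and "k \<le> j" and "j \<le> length A"
    and "(\<Union>i<k. S i) \<subseteq> {..j}"
proof -
  define U where "U = (\<Union>i<k. S i)"
  have U: "U \<subseteq> {1..length A}" using assms(1) unfolding U_def feasible_def by auto
  then have "finite U" by (rule finite_subset) simp
  moreover have "U \<noteq> {}" using assms(2,3) unfolding U_def by blast
  ultimately have jU: "Max U \<in> U" and max: "\<And>t. t \<in> U \<Longrightarrow> t \<le> Max U" by auto
  have finS: "finite (S i)" if "i < k" for i
    by (rule finite_subset[OF _ \<open>finite U\<close>]) (use that in \<open>auto simp: U_def\<close>)
  have "k = (\<Sum>i<k. 1)" by simp
  also have "\<dots> \<le> (\<Sum>i<k. card (S i))"
    using finS assms(3) by (intro sum_mono) (simp add: Suc_le_eq card_gt_0_iff)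
  also have "\<dots> = card U"
    unfolding U_def using finS assms(1) unfolding feasible_def
    by (intro card_UN_disjoint[symmetric]) auto
  also have "\<dots> \<le> card {1..Max U}" using U max by (intro card_mono) auto
  finally have "k \<le> Max U" by simp
  moreover obtain i0 where "i0 < k" "Max U \<in> S i0" using jU unfolding U_def by blast
  moreover have "Max U \<le> length A" using U jU by auto
  moreover have "U \<subseteq> {..Max U}" using max by auto
  ultimately show thesis using that unfolding U_def by blast
qed

lemma growth_power_le:
  fixes f :: "nat \<Rightarrow> real"
  assumes "1 \<le> k" and "0 \<le> r" and "1 \<le> q"
    and growth: "\<And>i. k \<le> i \<Longrightarrow> i \<le> n \<Longrightarrow> r * f (i - k + 1) \<le> f i"
  shows "q + t * (k - 1) \<le> n \<Longrightarrow> r ^ t * f q \<le> f (q + t * (k - 1))"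
proof (induction t)
  case (Suc t)
  have "r ^ Suc t * f q = r * (r ^ t * f q)" by simp
  also have "\<dots> \<le> r * f (q + t * (k - 1))"
    using Suc assms(2) by (intro mult_left_mono) auto
  also have "\<dots> \<le> f (q + Suc t * (k - 1))"
  proof -
    define i where "i = q + Suc t * (k - 1)"
    have ki: "k \<le> i" and idx: "i - k + 1 = q + t * (k - 1)"
      unfolding i_def mult_Suc using assms(1,3) by linarith+
    have "i \<le> n" using Suc.prems unfolding i_def .
    with ki have "r * f (i - k + 1) \<le> f i" by (rule growth)
    from this[unfolded idx] show ?thesis unfolding i_def .
  qed
  finally show ?case .
qed simp

lemma sum_le_of_growth:
  fixes f :: "nat \<Rightarrow> real"
  assumes "2 \<le> k" and "1 < r"
    and growth: "\<And>i. k \<le> i \<Longrightarrow> i \<le> n \<Longrightarrow> r * f (i - k + 1) \<le> f i"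
    and nonneg: "\<And>i. 1 \<le> i \<Longrightarrow> i \<le> n \<Longrightarrow> 0 \<le> f i"
    and mono: "\<And>i i'. 1 \<le> i \<Longrightarrow> i \<le> i' \<Longrightarrow> i' \<le> n \<Longrightarrow> f i \<le> f i'"
  shows "1 \<le> p \<Longrightarrow> p \<le> n \<Longrightarrow> (\<Sum>i=1..p. f i) \<le> (real k - 1) * r / (r - 1) * f p"
proof (induction p rule: less_induct)
  case (less p)
  define L where "L = (real k - 1) / (r - 1)"
  have L: "0 \<le> L" "(real k - 1) * r / (r - 1) = L * r" "L * r = L + (real k - 1)"
    using assms(1,2) unfolding L_def by (auto simp: field_simps)
  have fp: "0 \<le> f p" using nonneg less.prems by simp
  show ?case
  proof (cases "p < k")
    case True
    have "(\<Sum>i=1..p. f i) \<le> (\<Sum>i=1..p. f p)"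
      by (rule sum_mono) (use mono less.prems in auto)
    also have "\<dots> \<le> (real k - 1) * f p" using True fp by (simp add: mult_right_mono)
    also have "\<dots> \<le> (L * r) * f p" using L fp by (simp add: mult_right_mono)
    finally show ?thesis using L by simp
  next
    case False
    define q where "q = p - (k - 1)"
    have q: "1 \<le> q" "q < p" "p = q + (k - 1)" using False assms(1) unfolding q_def by auto
    have "(\<Sum>i=1..p. f i) = (\<Sum>i=1..q. f i) + (\<Sum>i=q+1..p. f i)"
      using sum.ub_add_nat[of 1 q f "k - 1"] q by simp
    also have "(\<Sum>i=1..q. f i) \<le> L * r * f q"
      using less.IH[OF q(2) q(1)] less.prems q L by simp
    also have "\<dots> \<le> L * f p"
      using growth[of p] L(1) False less.prems q by (simp add: mult.assoc mult_left_mono)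
    also have "(\<Sum>i=q+1..p. f i) \<le> real (card {q+1..p}) * f p"
      by (rule sum_bounded_above) (use mono less.prems q in auto)
    also have "real (card {q+1..p}) = real k - 1" using q assms(1) by (simp add: of_nat_diff)
    finally show ?thesis unfolding L(2,3) by (simp add: algebra_simps)
  qed
qed

lemma exp_le_one_plus_powr:
  fixes \<epsilon> L :: real
  assumes "0 < \<epsilon>" and "0 \<le> L"
  shows "exp L \<le> (1 + \<epsilon>) powr ((1 + 1 / \<epsilon>) * L)"
proof -
  have "\<epsilon> / (1 + \<epsilon>) \<le> ln (1 + \<epsilon>)" using ln_add1_ge[of \<epsilon>] assms(1) by (simp add: add.commute)
  then have "1 \<le> (1 + 1 / \<epsilon>) * ln (1 + \<epsilon>)" using assms(1) by (simp add: field_simps)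
  then have "L \<le> (1 + 1 / \<epsilon>) * L * ln (1 + \<epsilon>)"
    using mult_left_mono[OF _ assms(2)] by (fastforce simp: mult_ac)
  then show ?thesis using assms(1) by (simp add: powr_def)
qed

lemma exponent_choice:
  fixes \<epsilon> :: real and c :: int
  assumes "2 \<le> k" and "0 < \<epsilon>" and "\<epsilon> < 1"
    and c: "c = 1 + \<lceil>(1 + 1 / \<epsilon>) * ln (2 * (real k - 1) / \<epsilon>\<^sup>2)\<rceil>"
  shows "1 \<le> c" and "real k - 1 \<le> \<epsilon>\<^sup>2 * (1 + \<epsilon>) ^ (nat c - 1)"
proof -
  define x where "x = 2 * (real k - 1) / \<epsilon>\<^sup>2"
  define y where "y = (1 + 1 / \<epsilon>) * ln x"
  have "\<epsilon>\<^sup>2 < 1" using assms(2,3) by (simp add: power_less_one_iff)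
  then have "1 < x" using assms(1,2) unfolding x_def by (simp add: less_divide_eq)
  then have "0 \<le> y" using assms(2) unfolding y_def by simp
  then show "1 \<le> c" unfolding c x_def[symmetric] y_def[symmetric] by simp
  have n: "nat c - 1 = nat \<lceil>y\<rceil>"
    using \<open>0 \<le> y\<close> unfolding c x_def[symmetric] y_def[symmetric] by (simp add: nat_add_distrib)
  have "x = exp (ln x)" using \<open>1 < x\<close> by simp
  also have "\<dots> \<le> (1 + \<epsilon>) powr y"
    unfolding y_def using \<open>1 < x\<close> assms(2) by (intro exp_le_one_plus_powr) auto
  also have "\<dots> \<le> (1 + \<epsilon>) powr real (nat \<lceil>y\<rceil>)"
    using \<open>0 \<le> y\<close> assms(2) by (intro powr_mono) linarith+
  also have "\<dots> = (1 + \<epsilon>) ^ (nat c - 1)" unfolding n using assms(2) by (simp add: powr_realpow)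
  finally have "2 * (real k - 1) \<le> \<epsilon>\<^sup>2 * (1 + \<epsilon>) ^ (nat c - 1)"
    using assms(2) unfolding x_def by (simp add: divide_le_eq mult.commute)
  then show "real k - 1 \<le> \<epsilon>\<^sup>2 * (1 + \<epsilon>) ^ (nat c - 1)" using assms(1) by simp
qed

locale window_parameters =
  fixes k :: nat and A :: "nat list" and \<epsilon> :: real and c :: nat and C :: int
  assumes k_ge_2: "2 \<le> k" and sorted_A: "sorted A" and A_pos: "\<forall>x\<in>set A. 0 < x"
    and eps_pos: "0 < \<epsilon>" and c_pos: "1 \<le> c"
    and c_large: "real k - 1 \<le> \<epsilon>\<^sup>2 * (1 + \<epsilon>) ^ (c - 1)"
    and C_eq: "C = (int c + 1) * (int k - 1)"
begin

definition item :: "nat \<Rightarrow> real" where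
  "item i = real (A ! (i - 1))"

lemma SigmaS_eq_sum_item: "SigmaS S A = sum item S"
  unfolding SigmaS_def item_def ..

lemma item_nonneg: "0 \<le> item i"
  unfolding item_def by simp

lemma item_pos: "1 \<le> i \<Longrightarrow> i \<le> length A \<Longrightarrow> 0 < item i"
  using A_pos unfolding item_def by simp

lemma item_mono: "1 \<le> i \<Longrightarrow> i \<le> i' \<Longrightarrow> i' \<le> length A \<Longrightarrow> item i \<le> item i'"
  using sorted_nth_mono[OF sorted_A, of "i - 1" "i' - 1"] unfolding item_def by simp

lemma k_le_C: "int k \<le> C"
proof -
  have "int k \<le> 2 * (int k - 1)" using k_ge_2 by simp
  also have "\<dots> \<le> (int c + 1) * (int k - 1)"
    using c_pos k_ge_2 by (intro mult_right_mono) auto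
  finally show ?thesis unfolding C_eq .
qed

lemma window_OPT_le_item_ratio:
  assumes "k \<le> j" and "j \<le> length A"
  shows "window_OPT k C A \<le> ereal (item j / item (j - k + 1))"
proof -
  have "0 < A ! (j - k)" using A_pos assms k_ge_2 by simp
  then show ?thesis
    using window_OPT_le_singletons[OF sorted_A _ k_le_C assms] k_ge_2 assms(1)
    unfolding item_def by (simp add: Suc_diff_le)
qed

lemma prefix_sum_le_item:
  assumes growth: "\<And>i. k \<le> i \<Longrightarrow> i \<le> length A \<Longrightarrow> (1 + \<epsilon>) * item (i - k + 1) \<le> item i"
    and "1 \<le> p" and "p + c * (k - 1) \<le> length A"
  shows "(\<Sum>i=1..p. item i) \<le> \<epsilon> * item (p + c * (k - 1))"
proof -
  have "(\<Sum>i=1..p. item i) \<le> (real k - 1) * (1 + \<epsilon>) / (1 + \<epsilon> - 1) * item p"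
    using sum_le_of_growth[of k "1 + \<epsilon>" "length A" item p] k_ge_2 eps_pos growth
      assms(2,3) item_nonneg item_mono by simp
  also have "\<dots> = (real k - 1) * ((1 + \<epsilon>) / \<epsilon> * item p)" by simp
  also have "\<dots> \<le> \<epsilon>\<^sup>2 * (1 + \<epsilon>) ^ (c - 1) * ((1 + \<epsilon>) / \<epsilon> * item p)"
    using c_large eps_pos item_nonneg by (intro mult_right_mono) auto
  also have "\<dots> = \<epsilon> * ((1 + \<epsilon>) ^ c * item p)"
    using c_pos eps_pos by (cases c) (auto simp: power2_eq_square field_simps)
  also have "\<dots> \<le> \<epsilon> * item (p + c * (k - 1))"
    using growth_power_le[of k "1 + \<epsilon>" p "length A" item c] growth k_ge_2 eps_pos assms(2,3)
    by (intro mult_left_mono) auto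
  finally show ?thesis .
qed

lemma item_le_SigmaS:
  assumes "feasible k S A" and "i < k" and "t \<in> S i"
  shows "item t \<le> SigmaS (S i) A"
proof -
  have "finite (S i)" using assms(1,2) unfolding feasible_def by (meson finite_atLeastAtMost finite_subset)
  then show ?thesis unfolding SigmaS_eq_sum_item using assms(3)
    by (intro member_le_sum) (auto simp: item_nonneg)
qed

lemma window_OPT_le_if_flat:
  assumes "k \<le> i" and "i \<le> length A" and "item i \<le> (1 + \<epsilon>) * item (i - k + 1)"
  shows "window_OPT k C A \<le> ereal (1 + \<epsilon>)"
proof -
  have "0 < item (i - k + 1)" using assms(1,2) k_ge_2 by (intro item_pos) auto
  then have "item i / item (i - k + 1) \<le> 1 + \<epsilon>" using assms(3) by (simp add: divide_le_eq)
  then show ?thesis using window_OPT_le_item_ratio[OF assms(1,2)] by (simp add: order_trans)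
qed

lemma prefix_before_window_le:
  assumes growth: "\<And>i. k \<le> i \<Longrightarrow> i \<le> length A \<Longrightarrow> (1 + \<epsilon>) * item (i - k + 1) \<le> item i"
    and "k \<le> j" and "j \<le> length A" and "0 < m" and "(1 + \<epsilon>) * item (j - k + 1) < m"
  shows "(\<Sum>i=1..nat (int j - C). item i) \<le> \<epsilon> * (m / (1 + \<epsilon>))"
proof (cases "nat (int j - C) = 0")
  case True
  then show ?thesis using assms(4) eps_pos by simp
next
  case False
  define p where "p = nat (int j - C)"
  have "int p = int j - C" using False unfolding p_def by simp
  moreover have "int (c * (k - 1)) = int c * (int k - 1)" using k_ge_2 by (simp add: of_nat_diff)
  ultimately have "int (p + c * (k - 1)) = int j - C + int c * (int k - 1)" by simp
  also have "\<dots> = int (j - k + 1)" using assms(2) unfolding C_eq by (simp add: of_nat_diff algebra_simps)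
  finally have idx: "p + c * (k - 1) = j - k + 1" by (simp only: of_nat_eq_iff)
  have "1 \<le> p" using False unfolding p_def by simp
  moreover have "p + c * (k - 1) \<le> length A" unfolding idx using assms(2,3) k_ge_2 by simp
  ultimately have "(\<Sum>i=1..p. item i) \<le> \<epsilon> * item (j - k + 1)"
    by (subst idx[symmetric]) (rule prefix_sum_le_item[OF growth])
  also have "\<dots> \<le> \<epsilon> * (m / (1 + \<epsilon>))"
    using assms(5) eps_pos by (intro mult_left_mono) (auto simp: field_simps)
  finally show ?thesis unfolding p_def .
qed

lemma SigmaS_Diff_atMost:
  assumes "S \<subseteq> {1..length A}"
  shows "SigmaS S A - (\<Sum>i=1..p. item i) \<le> SigmaS (S - {..p}) A \<and> SigmaS (S - {..p}) A \<le> SigmaS S A"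
proof -
  have fin: "finite S" using assms finite_subset by blast
  have "sum item S = sum item (S \<inter> {..p}) + sum item (S - {..p})"
    using fin by (rule sum.Int_Diff)
  moreover have "sum item (S \<inter> {..p}) \<le> (\<Sum>i=1..p. item i)"
    using assms by (intro sum_mono2) (auto simp: item_nonneg)
  moreover have "sum item (S - {..p}) \<le> sum item S"
    using fin by (intro sum_mono2) (auto simp: item_nonneg)
  ultimately show ?thesis unfolding SigmaS_eq_sum_item by linarith
qed

lemma window_OPT_le_truncation:
  assumes growth: "\<And>i. k \<le> i \<Longrightarrow> i \<le> length A \<Longrightarrow> (1 + \<epsilon>) * item (i - k + 1) \<le> item i"
    and S: "feasible k S A" and m: "0 < m"
    and bounds: "\<And>i. i < k \<Longrightarrow> m \<le> SigmaS (S i) A \<and> SigmaS (S i) A \<le> M"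
    and j: "i0 < k" "j \<in> S i0" "k \<le> j" "j \<le> length A" and j_max: "(\<Union>i<k. S i) \<subseteq> {..j}"
    and small: "(1 + \<epsilon>) * item (j - k + 1) < m"
  shows "window_OPT k C A \<le> ereal ((1 + \<epsilon>) * (M / m))"
proof -
  define p where "p = nat (int j - C)"
  define T where "T i = S i - {..p}" for i
  have p_lt_j: "p < j" using k_le_C j(3) k_ge_2 unfolding p_def by linarith
  have loss: "(\<Sum>i=1..p. item i) \<le> \<epsilon> * (m / (1 + \<epsilon>))"
    unfolding p_def using prefix_before_window_le[OF growth j(3,4) m small] .
  have T_bounds: "m / (1 + \<epsilon>) \<le> SigmaS (T i) A \<and> SigmaS (T i) A \<le> M" if "i < k" for i
  proof -
    have "S i \<subseteq> {1..length A}" using S that unfolding feasible_def by blast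
    moreover have "m - \<epsilon> * (m / (1 + \<epsilon>)) = m / (1 + \<epsilon>)"
      using eps_pos by (simp add: field_simps)
    ultimately show ?thesis
      using SigmaS_Diff_atMost[of "S i" p] bounds[OF that] loss unfolding T_def by linarith
  qed
  have "window_OPT k C A \<le> ratio k T A"
  proof (rule window_OPT_le_ratio)
    show "feasible k T A" using S unfolding feasible_def T_def by blast
    show "j \<in> (\<Union>i<k. T i)" using j(1,2) p_lt_j unfolding T_def by auto
    show "int j - C < int t \<and> t \<le> j" if "i < k" "t \<in> T i" for i t
      using that j_max feasibleD(1)[OF S, of i t] unfolding T_def p_def by auto
  qed (use j in auto)
  also have "\<dots> \<le> ereal (M / (m / (1 + \<epsilon>)))"
    by (rule ratio_le_divide) (use k_ge_2 m eps_pos T_bounds in auto)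
  finally show ?thesis by (simp add: field_simps)
qed

lemma window_OPT_le_bounds:
  assumes S: "feasible k S A" and m: "0 < m"
    and bounds: "\<And>i. i < k \<Longrightarrow> m \<le> SigmaS (S i) A \<and> SigmaS (S i) A \<le> M"
  shows "window_OPT k C A \<le> ereal ((1 + \<epsilon>) * (M / m))"
proof -
  have nonempty: "S i \<noteq> {}" if "i < k" for i using bounds[OF that] m by (auto simp: SigmaS_def)
  have "0 < k" using k_ge_2 by simp
  then obtain i0 j where j: "i0 < k" "j \<in> S i0" "k \<le> j" "j \<le> length A"
    and j_max: "(\<Union>i<k. S i) \<subseteq> {..j}"
    by (rule feasible_max_index[OF S _ nonempty])
  have "m \<le> M" using bounds[of 0] k_ge_2 by auto
  have "item j \<le> M" using item_le_SigmaS[OF S j(1,2)] bounds[OF j(1)] by simp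
  consider (flat) i where "k \<le> i" "i \<le> length A" "item i \<le> (1 + \<epsilon>) * item (i - k + 1)"
    | (large) "m \<le> (1 + \<epsilon>) * item (j - k + 1)"
    | (growth) "\<And>i. k \<le> i \<Longrightarrow> i \<le> length A \<Longrightarrow> (1 + \<epsilon>) * item (i - k + 1) \<le> item i"
      and "(1 + \<epsilon>) * item (j - k + 1) < m"
    by (meson less_imp_le not_le)
  then show ?thesis
  proof cases
    case flat
    have "(1 + \<epsilon>) * 1 \<le> (1 + \<epsilon>) * (M / m)"
      using \<open>m \<le> M\<close> m eps_pos by (intro mult_left_mono) auto
    then show ?thesis using window_OPT_le_if_flat[OF flat] by (simp add: order_trans)
  next
    case large
    have "0 < item (j - k + 1)" using j(3,4) k_ge_2 by (intro item_pos) auto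
    then have "item j / item (j - k + 1) \<le> M / (m / (1 + \<epsilon>))"
      using large \<open>item j \<le> M\<close> m eps_pos item_nonneg[of j]
      by (intro frac_le) (auto simp: field_simps)
    also have "\<dots> = (1 + \<epsilon>) * (M / m)" using eps_pos by simp
    finally show ?thesis using window_OPT_le_item_ratio[OF j(3,4)] by (simp add: order_trans)
  next
    case growth
    then show ?thesis by (intro window_OPT_le_truncation[OF _ S m bounds j j_max]) auto
  qed
qed

lemma window_OPT_le_scaled_ratio:
  assumes "feasible k S A"
  shows "window_OPT k C A \<le> ereal (1 + \<epsilon>) * ratio k S A"
proof (cases "ratio k S A = \<infinity>")
  case True
  then show ?thesis using eps_pos by simp
next
  case False
  have "0 < k" using k_ge_2 by simp
  then obtain m M where "0 < m"
    and "\<And>i. i < k \<Longrightarrow> m \<le> SigmaS (S i) A \<and> SigmaS (S i) A \<le> M"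
    and "ratio k S A = ereal (M / m)"
    by (rule ratio_finiteE[OF _ False]) blast
  then show ?thesis using window_OPT_le_bounds[OF assms] by simp
qed

end

theorem lemma26:
  fixes k :: nat and A :: "nat list" and \<epsilon> :: real and c C :: int
  assumes "k \<ge> 2"
    and "sorted A" and "\<forall>x\<in>set A. x > 0"
    and "0 < \<epsilon>" and "\<epsilon> < 1"
    and "c = 1 + \<lceil>(1 + 1 / \<epsilon>) * ln (2 * (real k - 1) / \<epsilon>\<^sup>2)\<rceil>"
    and "C = (c + 1) * (int k - 1)"
  shows "OPT k A \<le> (INF j\<in>{k..length A}. OPT_L k (subrange A (int j - C + 1) (int j)))
     \<and> (INF j\<in>{k..length A}. OPT_L k (subrange A (int j - C + 1) (int j)))
         \<le> ereal (1 + \<epsilon>) * OPT k A"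
proof -
  have c: "1 \<le> c" "real k - 1 \<le> \<epsilon>\<^sup>2 * (1 + \<epsilon>) ^ (nat c - 1)"
    using exponent_choice[OF assms(1,4,5,6)] by auto
  have "C = (int (nat c) + 1) * (int k - 1)" using assms(7) c(1) by simp
  then interpret window_parameters k A \<epsilon> "nat c" C
    using assms(1-4) c by unfold_locales auto
  have "window_OPT k C A \<le> ereal (1 + \<epsilon>) * OPT k A"
    unfolding OPT_def using assms(4) window_OPT_le_scaled_ratio
    by (intro ereal_le_mult_INF) auto
  with OPT_le_window_OPT show ?thesis unfolding window_OPT_def by blast
qed

end
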